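(* Let $\alpha\in\mathbb{R}\setminus\{0\}$ and let $A=\{(x_1,y_1),\dots,(x_\ell,y_\ell)\}\subset\mathbb{R}_+^{m+n}$. Then: (a) $T_{\mathbb Q_\alpha,C}(A)$ and $T_{\mathbb Q_\alpha,V}(A)$ are closed; (b) $T_{\mathbb Q_\alpha,C}(A)$ and $T_{\mathbb Q_\alpha,V}(A)$ are $\mathbb Q_\alpha$-convex; (c) $T_{\mathbb Q_\alpha,C}(A)$ and $T_{\mathbb Q_\alpha,V}(A)$ satisfy free disposal, i.e. $T=(T+K)\cap\mathbb{R}_+^{m+n}$ for each of them; (d) $T_{\mathbb Q_\alpha,C}(A)$ is graph-translation homothetic: for all $(x,y)\in T_{\mathbb Q_\alpha,C}(A)$ and all $\delta\in\mathbb{R}$ with $(x+\delta1\!\!1_m,y+\delta1\!\!1_n)\ge0$, one has $(x+\delta1\!\!1_m,y+\delta1\!\!1_n)\in T_{\mathbb Q_\alpha,C}(A)$.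
   Context: $K=\mathbb{R}_+^m\times(-\mathbb{R}_+^n)$; $1\!\!1_m$ is the vector of ones; $\mathbf e$, $\mathbf{ln}$ are componentwise. $\mathbb M_\alpha=\mathbb{R}\cup\{-\infty\}$ if $\alpha>0$, $\mathbb M_\alpha=\mathbb{R}\cup\{+\infty\}$ if $\alpha<0$, with $e^{\alpha t}=0$ when $\alpha t=-\infty$ and $\ln0=-\infty$. The quantized technologies are $$T_{\mathbb Q_\alpha,C}(A)=\Big\{(x,y)\in\mathbb{R}_+^{m+n}: x\ge\tfrac1\alpha\mathbf{ln}\Big(\sum_{k}e^{\alpha t_k}\mathbf e^{\alpha x_k}\Big),\ y\le\tfrac1\alpha\mathbf{ln}\Big(\sum_k e^{\alpha t_k}\mathbf e^{\alpha y_k}\Big)\text{ for some }t\in\mathbb M_\alpha^\ell\Big\},$$ and $T_{\mathbb Q_\alpha,V}(A)$ is defined in the same way with the additional constraint $\frac1\alpha\ln\big(\sum_k e^{\alpha t_k}\big)=0$. A set $C\subset\mathbb M_\alpha^{d}$ is $\mathbb Q_\alpha$-convex if $\{\mathbf e^{\alpha z}:z\in C\}$ is convex. *)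

theory Defs
  imports "HOL-Analysis.Analysis" "HOL-Library.Extended_Real"
begin

definition Malpha :: "real \<Rightarrow> ereal set" where
  "Malpha \<alpha> = (if \<alpha> > 0 then {t. t \<noteq> \<infinity>} else {t. t \<noteq> -\<infinity>})"

definition qexp :: "real \<Rightarrow> ereal \<Rightarrow> real" where
  "qexp \<alpha> t = (if ereal \<alpha> * t = -\<infinity> then 0 else exp (real_of_ereal (ereal \<alpha> * t)))"

definition qln :: "real \<Rightarrow> real \<Rightarrow> ereal" where
  "qln \<alpha> s = (if s = 0 then ereal (1 / \<alpha>) * (-\<infinity>) else ereal (ln s / \<alpha>))"

definition TQC :: "real \<Rightarrow> nat \<Rightarrow> (nat \<Rightarrow> real^'m) \<Rightarrow> (nat \<Rightarrow> real^'n)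
    \<Rightarrow> ((real^'m) \<times> (real^'n)) set" where
  "TQC \<alpha> l X Y = {(x, y). (\<forall>i. 0 \<le> x $ i) \<and> (\<forall>j. 0 \<le> y $ j) \<and>
     (\<exists>t :: nat \<Rightarrow> ereal. (\<forall>k<l. t k \<in> Malpha \<alpha>) \<and>
        (\<forall>i. ereal (x $ i) \<ge> qln \<alpha> (\<Sum>k<l. qexp \<alpha> (t k) * exp (\<alpha> * (X k $ i)))) \<and>
        (\<forall>j. ereal (y $ j) \<le> qln \<alpha> (\<Sum>k<l. qexp \<alpha> (t k) * exp (\<alpha> * (Y k $ j)))))}"

definition TQV :: "real \<Rightarrow> nat \<Rightarrow> (nat \<Rightarrow> real^'m) \<Rightarrow> (nat \<Rightarrow> real^'n)
    \<Rightarrow> ((real^'m) \<times> (real^'n)) set" where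
  "TQV \<alpha> l X Y = {(x, y). (\<forall>i. 0 \<le> x $ i) \<and> (\<forall>j. 0 \<le> y $ j) \<and>
     (\<exists>t :: nat \<Rightarrow> ereal. (\<forall>k<l. t k \<in> Malpha \<alpha>) \<and>
        qln \<alpha> (\<Sum>k<l. qexp \<alpha> (t k)) = 0 \<and>
        (\<forall>i. ereal (x $ i) \<ge> qln \<alpha> (\<Sum>k<l. qexp \<alpha> (t k) * exp (\<alpha> * (X k $ i)))) \<and>
        (\<forall>j. ereal (y $ j) \<le> qln \<alpha> (\<Sum>k<l. qexp \<alpha> (t k) * exp (\<alpha> * (Y k $ j)))))}"

definition qconvex :: "real \<Rightarrow> ((real^'m) \<times> (real^'n)) set \<Rightarrow> bool" where
  "qconvex \<alpha> T = convex ((\<lambda>(x, y). ((\<chi> i. exp (\<alpha> * (x $ i))), (\<chi> j. exp (\<alpha> * (y $ j))))) ` T)"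

definition free_disposal :: "((real^'m) \<times> (real^'n)) set \<Rightarrow> bool" where
  "free_disposal T \<longleftrightarrow> T =
     {(x + u, y - v) | x y u v. (x, y) \<in> T \<and> (\<forall>i. 0 \<le> u $ i) \<and> (\<forall>j. 0 \<le> v $ j)}
     \<inter> {(x, y). (\<forall>i. 0 \<le> x $ i) \<and> (\<forall>j. 0 \<le> y $ j)}"

definition graph_translation_homothetic :: "((real^'m) \<times> (real^'n)) set \<Rightarrow> bool" where
  "graph_translation_homothetic T \<longleftrightarrow>
     (\<forall>x y (\<delta>::real). (x, y) \<in> T \<and> (\<forall>i. 0 \<le> x $ i + \<delta>) \<and> (\<forall>j. 0 \<le> y $ j + \<delta>) \<longrightarrow>
        (x + (\<chi> i. \<delta>), y + (\<chi> j. \<delta>)) \<in> T)"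

end

theory Submission
  imports Defs
begin

text \<open>Under the componentwise map \<open>E z = exp (\<alpha> z)\<close> the inequalities defining the quantized
  technologies become linear: a point \<open>(x, y) \<ge> 0\<close> lies in \<open>T\<^sub>C\<close> (resp. \<open>T\<^sub>V\<close>) iff \<open>E (x, y)\<close> lies
  in the set \<open>H\<close> of pairs \<open>(u, w)\<close> with \<open>\<alpha> \<Sum> c\<^sub>k E X\<^sub>k \<le> \<alpha> u\<close> and \<open>\<alpha> w \<le> \<alpha> \<Sum> c\<^sub>k E Y\<^sub>k\<close> for some
  weights \<open>c \<ge> 0\<close> (with \<open>\<Sum> c\<^sub>k = 1\<close>). The factor \<open>\<alpha>\<close> reverses the order when \<open>\<alpha> < 0\<close>, and the
  weights \<open>c\<^sub>k = exp (\<alpha> t\<^sub>k)\<close> exhaust \<open>[0, \<infinity>)\<close> because \<open>t\<^sub>k\<close> may be infinite.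
  The set \<open>H\<close> is convex, stable under \<open>\<alpha>\<close>-monotone changes of \<open>(u, w)\<close> and, without the
  normalisation \<open>\<Sum> c\<^sub>k = 1\<close>, under positive scaling. It is also closed: one input coordinate
  (\<open>\<alpha> > 0\<close>) or one output coordinate (\<open>\<alpha> < 0\<close>) bounds the weights, so the witnesses of a
  convergent sequence in \<open>H\<close> have a convergent subsequence. All of this passes back along \<open>E\<close>,
  which is continuous, monotone after scaling by \<open>\<alpha>\<close>, maps the orthant onto a convex set and
  turns translation by \<open>\<delta>\<close> into scaling by \<open>exp (\<alpha> \<delta>)\<close>.\<close>

definition qexp_vec :: "real \<Rightarrow> real^'n \<Rightarrow> real^'n" where
  "qexp_vec \<alpha> x = (\<chi> i. exp (\<alpha> * x $ i))"

definition qexp_pair :: "real \<Rightarrow> (real^'m) \<times> (real^'n) \<Rightarrow> (real^'m) \<times> (real^'n)" where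
  "qexp_pair \<alpha> = (\<lambda>(x, y). (qexp_vec \<alpha> x, qexp_vec \<alpha> y))"

definition orthant :: "((real^'m) \<times> (real^'n)) set" where
  "orthant = {(x, y). 0 \<le> x \<and> 0 \<le> y}"

definition qexp_comb :: "real \<Rightarrow> nat \<Rightarrow> (nat \<Rightarrow> real) \<Rightarrow> (nat \<Rightarrow> real^'n) \<Rightarrow> real^'n" where
  "qexp_comb \<alpha> l c Z = (\<Sum>k<l. c k *\<^sub>R qexp_vec \<alpha> (Z k))"

definition exp_technology :: "real \<Rightarrow> nat \<Rightarrow> (nat \<Rightarrow> real^'m) \<Rightarrow> (nat \<Rightarrow> real^'n) \<Rightarrow> bool
    \<Rightarrow> ((real^'m) \<times> (real^'n)) set" where
  "exp_technology \<alpha> l X Y vrs = {(u, w). \<exists>c. (\<forall>k<l. 0 \<le> c k) \<and> (vrs \<longrightarrow> (\<Sum>k<l. c k) = 1) \<and>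
     \<alpha> *\<^sub>R qexp_comb \<alpha> l c X \<le> \<alpha> *\<^sub>R u \<and> \<alpha> *\<^sub>R w \<le> \<alpha> *\<^sub>R qexp_comb \<alpha> l c Y}"

lemma scaled_exp_le_iff:
  fixes \<alpha> a b :: real
  assumes "\<alpha> \<noteq> 0"
  shows "\<alpha> * exp a \<le> \<alpha> * exp b \<longleftrightarrow> \<alpha> * a \<le> \<alpha> * b"
  using assms by (cases "\<alpha> > 0") (auto simp: mult_le_cancel_left)

lemma divide_le_iff_scaled_le:
  fixes \<alpha> a b :: real
  assumes "\<alpha> \<noteq> 0"
  shows "a / \<alpha> \<le> b \<longleftrightarrow> \<alpha> * a \<le> \<alpha> * (\<alpha> * b)"
  using assms by (cases "\<alpha> > 0") (auto simp: divide_le_eq mult_le_cancel_left mult.commute)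

lemma le_divide_iff_scaled_le:
  fixes \<alpha> a b :: real
  assumes "\<alpha> \<noteq> 0"
  shows "b \<le> a / \<alpha> \<longleftrightarrow> \<alpha> * (\<alpha> * b) \<le> \<alpha> * a"
  using assms by (cases "\<alpha> > 0") (auto simp: le_divide_eq mult_le_cancel_left mult.commute)

lemma qln_zero:
  assumes "\<alpha> \<noteq> 0"
  shows "qln \<alpha> 0 = (if \<alpha> > 0 then -\<infinity> else \<infinity>)"
  using assms by (simp add: qln_def)

lemma qln_le_ereal_iff:
  assumes "\<alpha> \<noteq> 0" "0 \<le> S"
  shows "qln \<alpha> S \<le> ereal x \<longleftrightarrow> \<alpha> * S \<le> \<alpha> * exp (\<alpha> * x)"
proof (cases "S = 0")
  case True
  then show ?thesis using assms(1) by (auto simp: qln_zero zero_le_mult_iff)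
next
  case False
  then have "0 < S" using assms(2) by simp
  have "qln \<alpha> S \<le> ereal x \<longleftrightarrow> ln S / \<alpha> \<le> x" using False by (simp add: qln_def)
  also have "\<dots> \<longleftrightarrow> \<alpha> * ln S \<le> \<alpha> * (\<alpha> * x)" by (rule divide_le_iff_scaled_le[OF assms(1)])
  also have "\<dots> \<longleftrightarrow> \<alpha> * exp (ln S) \<le> \<alpha> * exp (\<alpha> * x)" by (rule scaled_exp_le_iff[OF assms(1), symmetric])
  finally show ?thesis using \<open>0 < S\<close> by simp
qed

lemma ereal_le_qln_iff:
  assumes "\<alpha> \<noteq> 0" "0 \<le> S"
  shows "ereal y \<le> qln \<alpha> S \<longleftrightarrow> \<alpha> * exp (\<alpha> * y) \<le> \<alpha> * S"
proof (cases "S = 0")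
  case True
  then show ?thesis using assms(1) by (auto simp: qln_zero mult_le_0_iff)
next
  case False
  then have "0 < S" using assms(2) by simp
  have "ereal y \<le> qln \<alpha> S \<longleftrightarrow> y \<le> ln S / \<alpha>" using False by (simp add: qln_def)
  also have "\<dots> \<longleftrightarrow> \<alpha> * (\<alpha> * y) \<le> \<alpha> * ln S" by (rule le_divide_iff_scaled_le[OF assms(1)])
  also have "\<dots> \<longleftrightarrow> \<alpha> * exp (\<alpha> * y) \<le> \<alpha> * exp (ln S)" by (rule scaled_exp_le_iff[OF assms(1), symmetric])
  finally show ?thesis using \<open>0 < S\<close> by simp
qed

lemma qln_eq_0_iff:
  assumes "\<alpha> \<noteq> 0" "0 \<le> S"
  shows "qln \<alpha> S = 0 \<longleftrightarrow> S = 1"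
  using assms by (cases "\<alpha> > 0") (auto simp: qln_def zero_ereal_def)

lemma qexp_nonneg [simp]: "0 \<le> qexp \<alpha> t"
  by (simp add: qexp_def)

lemma qexp_image:
  assumes "\<alpha> \<noteq> 0"
  shows "qexp \<alpha> ` Malpha \<alpha> = {0..}"
proof (intro subset_antisym subsetI)
  fix c :: real assume "c \<in> {0..}"
  show "c \<in> qexp \<alpha> ` Malpha \<alpha>"
  proof (cases "c = 0")
    case True
    then show ?thesis using assms
      by (cases "\<alpha> > 0")
         (auto simp: qexp_def Malpha_def image_iff intro!: bexI[of _ "-\<infinity>"] bexI[of _ "\<infinity>"])
  next
    case False
    then show ?thesis using assms \<open>c \<in> {0..}\<close>
      by (auto simp: qexp_def Malpha_def image_iff intro!: bexI[of _ "ereal (ln c / \<alpha>)"])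
  qed
qed auto

lemma ex_qexp_weights_iff:
  assumes "\<alpha> \<noteq> 0"
    and P_cong: "\<And>c c'. (\<And>k. k < l \<Longrightarrow> c k = c' k) \<Longrightarrow> P c \<longleftrightarrow> P c'"
  shows "(\<exists>t. (\<forall>k<l. t k \<in> Malpha \<alpha>) \<and> P (\<lambda>k. qexp \<alpha> (t k))) \<longleftrightarrow> (\<exists>c. (\<forall>k<l. 0 \<le> c k) \<and> P c)"
proof
  assume "\<exists>c. (\<forall>k<l. 0 \<le> c k) \<and> P c"
  then obtain c where c: "\<forall>k<l. 0 \<le> c k" "P c" by blast
  have "\<forall>k<l. \<exists>t\<in>Malpha \<alpha>. qexp \<alpha> t = c k"
    using c(1) qexp_image[OF assms(1)] by (metis atLeast_iff imageE)
  then obtain t where "\<forall>k<l. t k \<in> Malpha \<alpha> \<and> qexp \<alpha> (t k) = c k" by metis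
  with c(2) P_cong show "\<exists>t. (\<forall>k<l. t k \<in> Malpha \<alpha>) \<and> P (\<lambda>k. qexp \<alpha> (t k))" by metis
next
  assume "\<exists>t. (\<forall>k<l. t k \<in> Malpha \<alpha>) \<and> P (\<lambda>k. qexp \<alpha> (t k))"
  then obtain t where "P (\<lambda>k. qexp \<alpha> (t k))" by blast
  then show "\<exists>c. (\<forall>k<l. 0 \<le> c k) \<and> P c" by (intro exI[of _ "\<lambda>k. qexp \<alpha> (t k)"]) simp
qed

lemma qexp_comb_component:
  "qexp_comb \<alpha> l c Z $ i = (\<Sum>k<l. c k * exp (\<alpha> * Z k $ i))"
  by (simp add: qexp_comb_def qexp_vec_def)

lemma qexp_comb_cong:
  "(\<And>k. k < l \<Longrightarrow> c k = c' k) \<Longrightarrow> qexp_comb \<alpha> l c Z = qexp_comb \<alpha> l c' Z"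
  unfolding qexp_comb_def by (rule sum.cong) auto

lemma qexp_comb_add: "qexp_comb \<alpha> l (\<lambda>k. c k + d k) Z = qexp_comb \<alpha> l c Z + qexp_comb \<alpha> l d Z"
  by (simp add: qexp_comb_def scaleR_add_left sum.distrib)

lemma qexp_comb_scale: "qexp_comb \<alpha> l (\<lambda>k. r * c k) Z = r *\<^sub>R qexp_comb \<alpha> l c Z"
  by (simp add: qexp_comb_def scaleR_sum_right)

lemma qexp_comb_component_ge:
  assumes "\<forall>k<l. 0 \<le> c k" "k < l"
  shows "c k * exp (\<alpha> * Z k $ i) \<le> qexp_comb \<alpha> l c Z $ i"
  unfolding qexp_comb_component using assms by (intro member_le_sum) auto

lemma tendsto_qexp_comb:
  assumes "\<And>k. k < l \<Longrightarrow> (\<lambda>n. c n k) \<longlonglongrightarrow> c0 k"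
  shows "(\<lambda>n. qexp_comb \<alpha> l (c n) Z) \<longlonglongrightarrow> qexp_comb \<alpha> l c0 Z"
  unfolding qexp_comb_def using assms by (intro tendsto_sum tendsto_scaleR tendsto_const) auto

lemma all_qln_le_iff:
  assumes "\<alpha> \<noteq> 0" "\<forall>k<l. 0 \<le> c k"
  shows "(\<forall>i. qln \<alpha> (\<Sum>k<l. c k * exp (\<alpha> * (Z k $ i))) \<le> ereal (x $ i))
    \<longleftrightarrow> \<alpha> *\<^sub>R qexp_comb \<alpha> l c Z \<le> \<alpha> *\<^sub>R qexp_vec \<alpha> x"
proof -
  have "0 \<le> (\<Sum>k<l. c k * exp (\<alpha> * Z k $ i))" for i
    using assms(2) by (intro sum_nonneg) auto
  then show ?thesis
    using assms(1) by (simp add: qln_le_ereal_iff less_eq_vec_def qexp_comb_component qexp_vec_def)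
qed

lemma all_le_qln_iff:
  assumes "\<alpha> \<noteq> 0" "\<forall>k<l. 0 \<le> c k"
  shows "(\<forall>j. ereal (y $ j) \<le> qln \<alpha> (\<Sum>k<l. c k * exp (\<alpha> * (Z k $ j))))
    \<longleftrightarrow> \<alpha> *\<^sub>R qexp_vec \<alpha> y \<le> \<alpha> *\<^sub>R qexp_comb \<alpha> l c Z"
proof -
  have "0 \<le> (\<Sum>k<l. c k * exp (\<alpha> * Z k $ i))" for i
    using assms(2) by (intro sum_nonneg) auto
  then show ?thesis
    using assms(1) by (simp add: ereal_le_qln_iff less_eq_vec_def qexp_comb_component qexp_vec_def)
qed

lemma ex_qexp_weights_conditions_iff:
  assumes "\<alpha> \<noteq> 0"
  shows "(\<exists>t. (\<forall>k<l. t k \<in> Malpha \<alpha>) \<and> (vrs \<longrightarrow> qln \<alpha> (\<Sum>k<l. qexp \<alpha> (t k)) = 0) \<and>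
      (\<forall>i. qln \<alpha> (\<Sum>k<l. qexp \<alpha> (t k) * exp (\<alpha> * (X k $ i))) \<le> ereal (x $ i)) \<and>
      (\<forall>j. ereal (y $ j) \<le> qln \<alpha> (\<Sum>k<l. qexp \<alpha> (t k) * exp (\<alpha> * (Y k $ j)))))
    \<longleftrightarrow> (\<exists>c. (\<forall>k<l. 0 \<le> c k) \<and> (vrs \<longrightarrow> (\<Sum>k<l. c k) = 1) \<and>
      \<alpha> *\<^sub>R qexp_comb \<alpha> l c X \<le> \<alpha> *\<^sub>R qexp_vec \<alpha> x \<and> \<alpha> *\<^sub>R qexp_vec \<alpha> y \<le> \<alpha> *\<^sub>R qexp_comb \<alpha> l c Y)"
    (is "?lhs \<longleftrightarrow> (\<exists>c. (\<forall>k<l. 0 \<le> c k) \<and> ?P c)")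
proof -
  have "?lhs \<longleftrightarrow> (\<exists>t. (\<forall>k<l. t k \<in> Malpha \<alpha>) \<and> ?P (\<lambda>k. qexp \<alpha> (t k)))"
    using assms by (simp add: all_qln_le_iff all_le_qln_iff qln_eq_0_iff sum_nonneg)
  also have "\<dots> \<longleftrightarrow> (\<exists>c. (\<forall>k<l. 0 \<le> c k) \<and> ?P c)"
  proof (rule ex_qexp_weights_iff[OF assms])
    fix c c' :: "nat \<Rightarrow> real"
    assume "\<And>k. k < l \<Longrightarrow> c k = c' k"
    then have "(\<Sum>k<l. c k) = (\<Sum>k<l. c' k)"
      "qexp_comb \<alpha> l c X = qexp_comb \<alpha> l c' X" "qexp_comb \<alpha> l c Y = qexp_comb \<alpha> l c' Y"
      by (auto intro: sum.cong qexp_comb_cong)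
    then show "?P c \<longleftrightarrow> ?P c'" by simp
  qed
  finally show ?thesis .
qed

lemma TQC_eq:
  fixes X :: "nat \<Rightarrow> real^'m" and Y :: "nat \<Rightarrow> real^'n"
  assumes "\<alpha> \<noteq> 0"
  shows "TQC \<alpha> l X Y = orthant \<inter> qexp_pair \<alpha> -` exp_technology \<alpha> l X Y False"
proof (intro set_eqI)
  fix p :: "(real^'m) \<times> (real^'n)"
  obtain x y where "p = (x, y)" by fastforce
  then show "p \<in> TQC \<alpha> l X Y \<longleftrightarrow> p \<in> orthant \<inter> qexp_pair \<alpha> -` exp_technology \<alpha> l X Y False"
    using ex_qexp_weights_conditions_iff[OF assms, where vrs = False and x = x and y = y]
    by (simp add: TQC_def orthant_def exp_technology_def qexp_pair_def less_eq_vec_def[of 0])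
qed

lemma TQV_eq:
  fixes X :: "nat \<Rightarrow> real^'m" and Y :: "nat \<Rightarrow> real^'n"
  assumes "\<alpha> \<noteq> 0"
  shows "TQV \<alpha> l X Y = orthant \<inter> qexp_pair \<alpha> -` exp_technology \<alpha> l X Y True"
proof (intro set_eqI)
  fix p :: "(real^'m) \<times> (real^'n)"
  obtain x y where "p = (x, y)" by fastforce
  then show "p \<in> TQV \<alpha> l X Y \<longleftrightarrow> p \<in> orthant \<inter> qexp_pair \<alpha> -` exp_technology \<alpha> l X Y True"
    using ex_qexp_weights_conditions_iff[OF assms, where vrs = True and x = x and y = y]
    by (simp add: TQV_def orthant_def exp_technology_def qexp_pair_def less_eq_vec_def[of 0])
qed

lemma orthant_eq_Times: "orthant = {x. 0 \<le> x} \<times> {y. 0 \<le> y}"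
  by (auto simp: orthant_def)

lemma closed_orthant: "closed orthant"
  unfolding orthant_eq_Times atLeast_def [symmetric] by (intro closed_Times closed_eucl_atLeast)

lemma continuous_on_qexp_vec [continuous_intros]:
  "continuous_on S f \<Longrightarrow> continuous_on S (\<lambda>x. qexp_vec \<alpha> (f x))"
  unfolding qexp_vec_def by (intro continuous_intros)

lemma continuous_on_qexp_pair: "continuous_on S (qexp_pair \<alpha>)"
  unfolding qexp_pair_def case_prod_beta by (intro continuous_intros)

lemma closed_orthant_qexp_preimage:
  "closed H \<Longrightarrow> closed (orthant \<inter> qexp_pair \<alpha> -` H)"
  using closed_vimage_Int[OF _ continuous_on_qexp_pair closed_orthant] by (simp add: Int_commute)

lemma qconvex_iff_convex_image: "qconvex \<alpha> T \<longleftrightarrow> convex (qexp_pair \<alpha> ` T)"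
  by (simp add: qconvex_def qexp_pair_def qexp_vec_def)

lemma qexp_vec_image_nonneg:
  "qexp_vec \<alpha> ` {x. 0 \<le> x} = {u :: real^'n. \<forall>i. u $ i \<in> (\<lambda>z. exp (\<alpha> * z)) ` {0..}}"
proof
  show "{u :: real^'n. \<forall>i. u $ i \<in> (\<lambda>z. exp (\<alpha> * z)) ` {0..}} \<subseteq> qexp_vec \<alpha> ` {x. 0 \<le> x}"
  proof
    fix u :: "real^'n"
    assume "u \<in> {u. \<forall>i. u $ i \<in> (\<lambda>z. exp (\<alpha> * z)) ` {0..}}"
    then have "\<forall>i. \<exists>z. 0 \<le> z \<and> u $ i = exp (\<alpha> * z)" by auto
    then obtain z where "\<And>i. 0 \<le> z i \<and> u $ i = exp (\<alpha> * z i)" by metis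
    then have "u = qexp_vec \<alpha> (vec_lambda z)" "0 \<le> vec_lambda z"
      by (auto simp: qexp_vec_def vec_eq_iff less_eq_vec_def)
    then show "u \<in> qexp_vec \<alpha> ` {x. 0 \<le> x}" by blast
  qed
qed (auto simp: qexp_vec_def less_eq_vec_def)

lemma convex_qexp_vec_image_nonneg: "convex (qexp_vec \<alpha> ` {x :: real^'n. 0 \<le> x})"
proof -
  have "convex ((\<lambda>z. exp (\<alpha> * z)) ` {0..})"
    unfolding connected_convex_1 [symmetric]
    by (intro connected_continuous_image continuous_intros) auto
  then show ?thesis
    unfolding qexp_vec_image_nonneg by (intro convex_box_cart) (simp add: Collect_mem_eq)
qed

lemma convex_qexp_pair_image_orthant: "convex (qexp_pair \<alpha> ` orthant)"
proof -
  have "qexp_pair \<alpha> ` orthant = qexp_vec \<alpha> ` {x. 0 \<le> x} \<times> qexp_vec \<alpha> ` {y. 0 \<le> y}"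
    by (force simp: orthant_eq_Times qexp_pair_def)
  then show ?thesis by (metis convex_Times convex_qexp_vec_image_nonneg)
qed

lemma qconvex_orthant_qexp_preimage:
  assumes "convex H"
  shows "qconvex \<alpha> (orthant \<inter> qexp_pair \<alpha> -` H)"
proof -
  have "qexp_pair \<alpha> ` (orthant \<inter> qexp_pair \<alpha> -` H) = qexp_pair \<alpha> ` orthant \<inter> H" by blast
  then show ?thesis
    by (simp add: qconvex_iff_convex_image convex_Int convex_qexp_pair_image_orthant assms)
qed

lemma free_disposalI:
  fixes T :: "((real^'m) \<times> (real^'n)) set"
  assumes "T \<subseteq> orthant"
    and "\<And>x y x' y'. (x, y) \<in> T \<Longrightarrow> x \<le> x' \<Longrightarrow> y' \<le> y \<Longrightarrow> 0 \<le> y' \<Longrightarrow> (x', y') \<in> T"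
  shows "free_disposal T"
  unfolding free_disposal_def
proof (intro subset_antisym subsetI)
  fix p assume "p \<in> T"
  moreover obtain x y where "p = (x, y)" by fastforce
  ultimately have "(x, y) \<in> T" "0 \<le> x" "0 \<le> y" using assms(1) by (auto simp: orthant_def)
  then show "p \<in> {(x + u, y - v) |x y u v. (x, y) \<in> T \<and> (\<forall>i. 0 \<le> u $ i) \<and> (\<forall>j. 0 \<le> v $ j)}
      \<inter> {(x, y). (\<forall>i. 0 \<le> x $ i) \<and> (\<forall>j. 0 \<le> y $ j)}"
    unfolding \<open>p = (x, y)\<close>
    by (intro IntI CollectI exI[of _ x] exI[of _ y] exI[of _ 0] exI[of _ 0])
       (simp_all add: less_eq_vec_def)
next
  fix p assume "p \<in> {(x + u, y - v) |x y u v. (x, y) \<in> T \<and> (\<forall>i. 0 \<le> u $ i) \<and> (\<forall>j. 0 \<le> v $ j)}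
      \<inter> {(x, y). (\<forall>i. 0 \<le> x $ i) \<and> (\<forall>j. 0 \<le> y $ j)}"
  then obtain x y u v where "p = (x + u, y - v)" "(x, y) \<in> T"
    "\<forall>i. 0 \<le> u $ i" "\<forall>j. 0 \<le> v $ j" "\<forall>j. 0 \<le> (y - v) $ j"
    by blast
  then show "p \<in> T" using assms(2) by (simp add: less_eq_vec_def)
qed

lemma scaleR_qexp_vec_mono:
  assumes "x \<le> x'"
  shows "\<alpha> *\<^sub>R qexp_vec \<alpha> x \<le> \<alpha> *\<^sub>R qexp_vec \<alpha> x'"
proof (cases "\<alpha> = 0")
  case False
  have "\<alpha> * (\<alpha> * x $ i) \<le> \<alpha> * (\<alpha> * x' $ i)" for i
    using assms mult_left_mono[of "x $ i" "x' $ i" "\<alpha> * \<alpha>"]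
    by (simp add: less_eq_vec_def mult.assoc)
  then show ?thesis
    by (simp add: less_eq_vec_def qexp_vec_def scaled_exp_le_iff[OF False])
qed simp

lemma free_disposal_orthant_qexp_preimage:
  assumes "\<And>u w u' w'. (u, w) \<in> H \<Longrightarrow> \<alpha> *\<^sub>R u \<le> \<alpha> *\<^sub>R u' \<Longrightarrow> \<alpha> *\<^sub>R w' \<le> \<alpha> *\<^sub>R w \<Longrightarrow> (u', w') \<in> H"
  shows "free_disposal (orthant \<inter> qexp_pair \<alpha> -` H)"
proof (rule free_disposalI)
  fix x y x' y'
  assume xy: "(x, y) \<in> orthant \<inter> qexp_pair \<alpha> -` H" and "x \<le> x'" "y' \<le> y" "0 \<le> y'"
  then have "0 \<le> x'" by (auto simp: orthant_def)
  moreover have "(qexp_vec \<alpha> x', qexp_vec \<alpha> y') \<in> H"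
    by (rule assms[of "qexp_vec \<alpha> x" "qexp_vec \<alpha> y"])
       (use xy \<open>x \<le> x'\<close> \<open>y' \<le> y\<close> in \<open>simp_all add: qexp_pair_def scaleR_qexp_vec_mono\<close>)
  ultimately show "(x', y') \<in> orthant \<inter> qexp_pair \<alpha> -` H"
    using \<open>0 \<le> y'\<close> by (simp add: orthant_def qexp_pair_def)
qed auto

lemma qexp_vec_add_const: "qexp_vec \<alpha> (x + (\<chi> i. \<delta>)) = exp (\<alpha> * \<delta>) *\<^sub>R qexp_vec \<alpha> x"
  by (simp add: qexp_vec_def vec_eq_iff distrib_left exp_add)

lemma graph_translation_homothetic_orthant_qexp_preimage:
  assumes "\<And>r u w. 0 < r \<Longrightarrow> (u, w) \<in> H \<Longrightarrow> (r *\<^sub>R u, r *\<^sub>R w) \<in> H"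
  shows "graph_translation_homothetic (orthant \<inter> qexp_pair \<alpha> -` H)"
  unfolding graph_translation_homothetic_def
  using assms by (auto simp: orthant_def qexp_pair_def qexp_vec_add_const less_eq_vec_def)

lemma convex_exp_technology: "convex (exp_technology \<alpha> l X Y vrs)"
proof (rule convexI)
  fix p q and a b :: real
  assume "p \<in> exp_technology \<alpha> l X Y vrs" "q \<in> exp_technology \<alpha> l X Y vrs" and ab: "0 \<le> a" "0 \<le> b" "a + b = 1"
  then obtain u1 w1 c1 u2 w2 c2 where pq: "p = (u1, w1)" "q = (u2, w2)"
    and c1: "\<forall>k<l. 0 \<le> c1 k" "vrs \<longrightarrow> (\<Sum>k<l. c1 k) = 1"
      "\<alpha> *\<^sub>R qexp_comb \<alpha> l c1 X \<le> \<alpha> *\<^sub>R u1" "\<alpha> *\<^sub>R w1 \<le> \<alpha> *\<^sub>R qexp_comb \<alpha> l c1 Y"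
    and c2: "\<forall>k<l. 0 \<le> c2 k" "vrs \<longrightarrow> (\<Sum>k<l. c2 k) = 1"
      "\<alpha> *\<^sub>R qexp_comb \<alpha> l c2 X \<le> \<alpha> *\<^sub>R u2" "\<alpha> *\<^sub>R w2 \<le> \<alpha> *\<^sub>R qexp_comb \<alpha> l c2 Y"
    by (auto simp: exp_technology_def)
  let ?c = "\<lambda>k. a * c1 k + b * c2 k"
  have "\<forall>k<l. 0 \<le> ?c k" using c1(1) c2(1) ab by simp
  moreover have "vrs \<longrightarrow> (\<Sum>k<l. ?c k) = 1"
    using c1(2) c2(2) ab by (simp add: sum.distrib flip: sum_distrib_left)
  moreover have "a *\<^sub>R (\<alpha> *\<^sub>R qexp_comb \<alpha> l c1 X) + b *\<^sub>R (\<alpha> *\<^sub>R qexp_comb \<alpha> l c2 X)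
      \<le> a *\<^sub>R (\<alpha> *\<^sub>R u1) + b *\<^sub>R (\<alpha> *\<^sub>R u2)"
    by (rule add_mono[OF scaleR_left_mono[OF c1(3) ab(1)] scaleR_left_mono[OF c2(3) ab(2)]])
  moreover have "a *\<^sub>R (\<alpha> *\<^sub>R w1) + b *\<^sub>R (\<alpha> *\<^sub>R w2)
      \<le> a *\<^sub>R (\<alpha> *\<^sub>R qexp_comb \<alpha> l c1 Y) + b *\<^sub>R (\<alpha> *\<^sub>R qexp_comb \<alpha> l c2 Y)"
    by (rule add_mono[OF scaleR_left_mono[OF c1(4) ab(1)] scaleR_left_mono[OF c2(4) ab(2)]])
  ultimately show "a *\<^sub>R p + b *\<^sub>R q \<in> exp_technology \<alpha> l X Y vrs"
    unfolding pq exp_technology_def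
    by (auto simp: qexp_comb_add qexp_comb_scale scaleR_add_right mult.commute intro!: exI[of _ ?c])
qed

lemma exp_technology_mono:
  assumes "(u, w) \<in> exp_technology \<alpha> l X Y vrs" "\<alpha> *\<^sub>R u \<le> \<alpha> *\<^sub>R u'" "\<alpha> *\<^sub>R w' \<le> \<alpha> *\<^sub>R w"
  shows "(u', w') \<in> exp_technology \<alpha> l X Y vrs"
proof -
  obtain c where "\<forall>k<l. 0 \<le> c k" "vrs \<longrightarrow> (\<Sum>k<l. c k) = 1"
    "\<alpha> *\<^sub>R qexp_comb \<alpha> l c X \<le> \<alpha> *\<^sub>R u" "\<alpha> *\<^sub>R w \<le> \<alpha> *\<^sub>R qexp_comb \<alpha> l c Y"
    using assms(1) by (auto simp: exp_technology_def)
  moreover from this(3,4) have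
    "\<alpha> *\<^sub>R qexp_comb \<alpha> l c X \<le> \<alpha> *\<^sub>R u'" "\<alpha> *\<^sub>R w' \<le> \<alpha> *\<^sub>R qexp_comb \<alpha> l c Y"
    using assms(2,3) order_trans by blast+
  ultimately show ?thesis by (auto simp: exp_technology_def)
qed

lemma exp_technology_scaleR:
  assumes "0 < r" "(u, w) \<in> exp_technology \<alpha> l X Y False"
  shows "(r *\<^sub>R u, r *\<^sub>R w) \<in> exp_technology \<alpha> l X Y False"
proof -
  obtain c where c: "\<forall>k<l. 0 \<le> c k"
    "\<alpha> *\<^sub>R qexp_comb \<alpha> l c X \<le> \<alpha> *\<^sub>R u" "\<alpha> *\<^sub>R w \<le> \<alpha> *\<^sub>R qexp_comb \<alpha> l c Y"
    using assms(2) by (auto simp: exp_technology_def)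
  have "r *\<^sub>R (\<alpha> *\<^sub>R qexp_comb \<alpha> l c X) \<le> r *\<^sub>R (\<alpha> *\<^sub>R u)"
    "r *\<^sub>R (\<alpha> *\<^sub>R w) \<le> r *\<^sub>R (\<alpha> *\<^sub>R qexp_comb \<alpha> l c Y)"
    using c(2,3) less_imp_le[OF assms(1)] by (metis scaleR_left_mono)+
  then have "\<alpha> *\<^sub>R qexp_comb \<alpha> l (\<lambda>k. r * c k) X \<le> \<alpha> *\<^sub>R r *\<^sub>R u"
    "\<alpha> *\<^sub>R r *\<^sub>R w \<le> \<alpha> *\<^sub>R qexp_comb \<alpha> l (\<lambda>k. r * c k) Y"
    by (simp_all add: qexp_comb_scale mult.commute)
  with c(1) assms(1) show ?thesis
    by (auto simp: exp_technology_def intro!: exI[of _ "\<lambda>k. r * c k"])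
qed

lemma LIMSEQ_le_vec:
  fixes f g :: "nat \<Rightarrow> real^'n"
  assumes "f \<longlonglongrightarrow> a" "g \<longlonglongrightarrow> b" "\<And>n. f n \<le> g n"
  shows "a \<le> b"
  unfolding less_eq_vec_def
proof
  fix i
  show "a $ i \<le> b $ i"
    by (rule LIMSEQ_le[OF tendsto_vec_nth[OF assms(1)] tendsto_vec_nth[OF assms(2)]])
       (use assms(3) in \<open>auto simp: less_eq_vec_def\<close>)
qed

lemma bounded_weights_convergent_subseq:
  fixes c :: "nat \<Rightarrow> nat \<Rightarrow> real"
  assumes "\<And>k. k < l \<Longrightarrow> bounded (range (\<lambda>n. c n k))"
  shows "\<exists>r c0. strict_mono r \<and> (\<forall>k<l. (\<lambda>n. c (r n) k) \<longlonglongrightarrow> c0 k)"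
proof -
  have "\<forall>d\<subseteq>{..<l}. \<exists>c0 r. strict_mono r \<and>
      (\<forall>e>0. \<forall>\<^sub>F n in sequentially. \<forall>k\<in>d. dist (c (r n) k) (c0 k) < e)"
    by (rule compact_lemma_general[where proj = "\<lambda>g k. g k" and unproj = "\<lambda>g. g"])
       (use assms in \<open>auto simp: image_image\<close>)
  then obtain c0 r where "strict_mono r"
    and ev: "\<forall>e>0. \<forall>\<^sub>F n in sequentially. \<forall>k\<in>{..<l}. dist (c (r n) k) (c0 k) < e"
    by blast
  moreover have "(\<lambda>n. c (r n) k) \<longlonglongrightarrow> c0 k" if "k < l" for k
  proof (unfold tendsto_iff, intro allI impI)
    fix e :: real assume "e > 0"
    with ev have "\<forall>\<^sub>F n in sequentially. \<forall>k\<in>{..<l}. dist (c (r n) k) (c0 k) < e" by blast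
    then show "\<forall>\<^sub>F n in sequentially. dist (c (r n) k) (c0 k) < e"
      by (rule eventually_mono) (simp add: that)
  qed
  ultimately show ?thesis by blast
qed

lemma exp_technology_weight_le:
  assumes "\<alpha> \<noteq> 0" "\<forall>k<l. 0 \<le> c k" "k < l"
    and "\<alpha> *\<^sub>R qexp_comb \<alpha> l c X \<le> \<alpha> *\<^sub>R u" "\<alpha> *\<^sub>R w \<le> \<alpha> *\<^sub>R qexp_comb \<alpha> l c Y"
  shows "c k \<le> max (u $ i / exp (\<alpha> * X k $ i)) (w $ j / exp (\<alpha> * Y k $ j))"
proof (cases "\<alpha> > 0")
  case True
  have "qexp_comb \<alpha> l c X $ i \<le> u $ i"
    using assms(4) True by (simp add: less_eq_vec_def mult_le_cancel_left_pos)
  then have "c k * exp (\<alpha> * X k $ i) \<le> u $ i"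
    using qexp_comb_component_ge[OF assms(2,3), of \<alpha> X i] by linarith
  then have "c k \<le> u $ i / exp (\<alpha> * X k $ i)" by (simp add: pos_le_divide_eq)
  then show ?thesis by (simp add: le_max_iff_disj)
next
  case False
  then have "\<alpha> < 0" using assms(1) by simp
  have "qexp_comb \<alpha> l c Y $ j \<le> w $ j"
    using assms(5) \<open>\<alpha> < 0\<close> by (simp add: less_eq_vec_def mult_le_cancel_left_neg)
  then have "c k * exp (\<alpha> * Y k $ j) \<le> w $ j"
    using qexp_comb_component_ge[OF assms(2,3), of \<alpha> Y j] by linarith
  then have "c k \<le> w $ j / exp (\<alpha> * Y k $ j)" by (simp add: pos_le_divide_eq)
  then show ?thesis by (simp add: le_max_iff_disj)
qed

lemma exp_technology_weights_bounded:
  assumes "\<alpha> \<noteq> 0" "U \<longlonglongrightarrow> u" "W \<longlonglongrightarrow> w" "k < l"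
    and wit: "\<And>n. (\<forall>k<l. 0 \<le> c n k) \<and>
      \<alpha> *\<^sub>R qexp_comb \<alpha> l (c n) X \<le> \<alpha> *\<^sub>R U n \<and> \<alpha> *\<^sub>R W n \<le> \<alpha> *\<^sub>R qexp_comb \<alpha> l (c n) Y"
  shows "bounded (range (\<lambda>n. c n k))"
proof -
  fix i j
  let ?M = "\<lambda>n. max (U n $ i / exp (\<alpha> * X k $ i)) (W n $ j / exp (\<alpha> * Y k $ j))"
  have "?M \<longlonglongrightarrow> max (u $ i / exp (\<alpha> * X k $ i)) (w $ j / exp (\<alpha> * Y k $ j))"
    by (intro tendsto_max tendsto_divide tendsto_vec_nth assms(2,3) tendsto_const) simp_all
  then have "convergent ?M" by (rule convergentI)
  then obtain B where B: "\<And>n. norm (?M n) \<le> B"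
    using BseqD[OF convergent_imp_Bseq] by blast
  have c_nonneg: "0 \<le> c n k" and c_le: "c n k \<le> ?M n" for n
    using exp_technology_weight_le[OF assms(1) _ assms(4), of "c n" X "U n" "W n" Y i j] wit[of n] assms(4)
    by auto
  have "norm (c n k) \<le> B" for n
    using B[of n] c_nonneg[of n] c_le[of n] abs_ge_self[of "?M n"] by (auto simp: le_max_iff_disj)
  then show ?thesis unfolding Bseq_eq_bounded [symmetric] by (rule BseqI')
qed

lemma exp_technology_limit:
  assumes wit: "\<And>n. (\<forall>k<l. 0 \<le> c n k) \<and> (vrs \<longrightarrow> (\<Sum>k<l. c n k) = 1) \<and>
      \<alpha> *\<^sub>R qexp_comb \<alpha> l (c n) X \<le> \<alpha> *\<^sub>R U n \<and> \<alpha> *\<^sub>R W n \<le> \<alpha> *\<^sub>R qexp_comb \<alpha> l (c n) Y"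
    and "U \<longlonglongrightarrow> u" "W \<longlonglongrightarrow> w" and c0: "\<And>k. k < l \<Longrightarrow> (\<lambda>n. c n k) \<longlonglongrightarrow> c0 k"
  shows "(u, w) \<in> exp_technology \<alpha> l X Y vrs"
proof -
  have "\<forall>k<l. 0 \<le> c0 k"
    using wit by (auto intro!: LIMSEQ_le_const[OF c0])
  moreover have "vrs \<longrightarrow> (\<Sum>k<l. c0 k) = 1"
  proof
    assume vrs
    have "(\<lambda>n. \<Sum>k<l. c n k) \<longlonglongrightarrow> (\<Sum>k<l. c0 k)" by (intro tendsto_sum c0) simp
    moreover have "(\<lambda>n. \<Sum>k<l. c n k) = (\<lambda>n. 1)" using wit \<open>vrs\<close> by simp
    ultimately show "(\<Sum>k<l. c0 k) = 1" by (simp add: LIMSEQ_const_iff)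
  qed
  moreover have "\<alpha> *\<^sub>R qexp_comb \<alpha> l c0 X \<le> \<alpha> *\<^sub>R u"
    using wit by (intro LIMSEQ_le_vec[OF tendsto_scaleR[OF tendsto_const tendsto_qexp_comb[OF c0]]
        tendsto_scaleR[OF tendsto_const assms(2)]]) auto
  moreover have "\<alpha> *\<^sub>R w \<le> \<alpha> *\<^sub>R qexp_comb \<alpha> l c0 Y"
    using wit by (intro LIMSEQ_le_vec[OF tendsto_scaleR[OF tendsto_const assms(3)]
        tendsto_scaleR[OF tendsto_const tendsto_qexp_comb[OF c0]]]) auto
  ultimately show ?thesis by (auto simp: exp_technology_def)
qed

lemma closed_exp_technology:
  fixes X :: "nat \<Rightarrow> real^'m" and Y :: "nat \<Rightarrow> real^'n"
  assumes "\<alpha> \<noteq> 0"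
  shows "closed (exp_technology \<alpha> l X Y vrs)"
  unfolding closed_sequential_limits
proof (intro allI impI, elim conjE)
  fix s :: "nat \<Rightarrow> (real^'m) \<times> (real^'n)" and p
  assume mem: "\<forall>n. s n \<in> exp_technology \<alpha> l X Y vrs" and lim: "s \<longlonglongrightarrow> p"
  define U W where "U n = fst (s n)" and "W n = snd (s n)" for n
  have "\<forall>n. \<exists>c. (\<forall>k<l. 0 \<le> c k) \<and> (vrs \<longrightarrow> (\<Sum>k<l. c k) = 1) \<and>
      \<alpha> *\<^sub>R qexp_comb \<alpha> l c X \<le> \<alpha> *\<^sub>R U n \<and> \<alpha> *\<^sub>R W n \<le> \<alpha> *\<^sub>R qexp_comb \<alpha> l c Y"
    using mem by (auto simp: exp_technology_def U_def W_def case_prod_unfold)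
  then obtain c where wit: "\<And>n. (\<forall>k<l. 0 \<le> c n k) \<and> (vrs \<longrightarrow> (\<Sum>k<l. c n k) = 1) \<and>
      \<alpha> *\<^sub>R qexp_comb \<alpha> l (c n) X \<le> \<alpha> *\<^sub>R U n \<and> \<alpha> *\<^sub>R W n \<le> \<alpha> *\<^sub>R qexp_comb \<alpha> l (c n) Y"
    by metis
  have U: "U \<longlonglongrightarrow> fst p" and W: "W \<longlonglongrightarrow> snd p"
    unfolding U_def W_def by (intro tendsto_fst tendsto_snd lim)+
  have bounded: "bounded (range (\<lambda>n. c n k))" if "k < l" for k
    by (rule exp_technology_weights_bounded[OF assms U W that]) (use wit in blast)
  have "\<exists>r c0. strict_mono r \<and> (\<forall>k<l. (\<lambda>n. c (r n) k) \<longlonglongrightarrow> c0 k)"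
    by (rule bounded_weights_convergent_subseq) (rule bounded)
  then obtain r c0 where r: "strict_mono r" and c0: "\<And>k. k < l \<Longrightarrow> (\<lambda>n. c (r n) k) \<longlonglongrightarrow> c0 k"
    by blast
  have "(fst p, snd p) \<in> exp_technology \<alpha> l X Y vrs"
    using wit LIMSEQ_subseq_LIMSEQ[OF U r] LIMSEQ_subseq_LIMSEQ[OF W r] c0
    by (intro exp_technology_limit[where c = "\<lambda>n. c (r n)" and U = "U \<circ> r" and W = "W \<circ> r"]) auto
  then show "p \<in> exp_technology \<alpha> l X Y vrs" by simp
qed

theorem mainTheorem3:
  fixes \<alpha> :: real and l :: nat
    and X :: "nat \<Rightarrow> real^'m" and Y :: "nat \<Rightarrow> real^'n"
  assumes "\<alpha> \<noteq> 0"
    and "\<forall>k<l. (\<forall>i. 0 \<le> X k $ i) \<and> (\<forall>j. 0 \<le> Y k $ j)"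
  shows "(closed (TQC \<alpha> l X Y) \<and> closed (TQV \<alpha> l X Y))
    \<and> (qconvex \<alpha> (TQC \<alpha> l X Y) \<and> qconvex \<alpha> (TQV \<alpha> l X Y))
    \<and> (free_disposal (TQC \<alpha> l X Y) \<and> free_disposal (TQV \<alpha> l X Y))
    \<and> graph_translation_homothetic (TQC \<alpha> l X Y)"
proof -
  let ?T = "\<lambda>vrs. orthant \<inter> qexp_pair \<alpha> -` exp_technology \<alpha> l X Y vrs"
  have "closed (?T vrs)" for vrs
    by (intro closed_orthant_qexp_preimage closed_exp_technology assms(1))
  moreover have "qconvex \<alpha> (?T vrs)" for vrs
    by (intro qconvex_orthant_qexp_preimage convex_exp_technology)
  moreover have "free_disposal (?T vrs)" for vrs
    by (rule free_disposal_orthant_qexp_preimage) (rule exp_technology_mono)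
  moreover have "graph_translation_homothetic (?T False)"
    by (rule graph_translation_homothetic_orthant_qexp_preimage) (rule exp_technology_scaleR)
  ultimately show ?thesis
    by (simp add: TQC_eq[OF assms(1)] TQV_eq[OF assms(1)])
qed

end
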